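(* Let $n\ge1$. The path $P_n$ admits an extended irregular dominating labeling if and only if $n\ne 2,3$.
   Context: $P_n$ is the path on $n$ vertices $[x_1,\dots,x_n]$ with edges $\{x_i,x_{i+1}\}$, $1\le i\le n-1$. In a finite simple graph $\Gamma=(V,E)$ with distance $d$, a vertex $v$ carrying a non-negative integer label $\ell$ dominates (covers) exactly the vertices $u$ with $d(u,v)=\ell$; a vertex labeled $0$ dominates only itself. An extended irregular dominating labeling is a labeling $\lambda:S\to\mathbb{Z}_{\ge0}$ of a set $S\subseteq V$ with distinct labels on distinct vertices, such that every vertex of $V$ is dominated by some vertex of $S$, and some vertex of $S$ has label $0$. *)

theory Defs
  imports Main
begin

text \<open>A finite simple graph is given by a vertex set V and a symmetric irreflexive
edge relation E (only its restriction to V matters).\<close>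

definition walk :: "'a set \<Rightarrow> ('a \<Rightarrow> 'a \<Rightarrow> bool) \<Rightarrow> nat \<Rightarrow> 'a \<Rightarrow> 'a \<Rightarrow> bool" where
  "walk V E k u v \<longleftrightarrow> (\<exists>w :: nat \<Rightarrow> 'a. w 0 = u \<and> w k = v \<and> (\<forall>i\<le>k. w i \<in> V)
                         \<and> (\<forall>i<k. E (w i) (w (Suc i))))"

definition graph_dist_is :: "'a set \<Rightarrow> ('a \<Rightarrow> 'a \<Rightarrow> bool) \<Rightarrow> 'a \<Rightarrow> 'a \<Rightarrow> nat \<Rightarrow> bool" where
  "graph_dist_is V E u v l \<longleftrightarrow> walk V E l u v \<and> (\<forall>k<l. \<not> walk V E k u v)"

text \<open>Vertex v labelled l dominates u iff d(u,v) = l (label 0 dominates only v itself).\<close>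
definition dominates :: "'a set \<Rightarrow> ('a \<Rightarrow> 'a \<Rightarrow> bool) \<Rightarrow> 'a \<Rightarrow> nat \<Rightarrow> 'a \<Rightarrow> bool" where
  "dominates V E v l u \<longleftrightarrow> graph_dist_is V E u v l"

definition ext_irr_dom_labeling ::
  "'a set \<Rightarrow> ('a \<Rightarrow> 'a \<Rightarrow> bool) \<Rightarrow> 'a set \<Rightarrow> ('a \<Rightarrow> nat) \<Rightarrow> bool" where
  "ext_irr_dom_labeling V E S lam \<longleftrightarrow>
     S \<subseteq> V \<and> inj_on lam S
     \<and> (\<forall>u\<in>V. \<exists>v\<in>S. dominates V E v (lam v) u)
     \<and> (\<exists>v\<in>S. lam v = 0)"

definition admits_ext_irr_dom_labeling :: "'a set \<Rightarrow> ('a \<Rightarrow> 'a \<Rightarrow> bool) \<Rightarrow> bool" where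
  "admits_ext_irr_dom_labeling V E \<longleftrightarrow> (\<exists>S lam. ext_irr_dom_labeling V E S lam)"

text \<open>The path P_n on vertices x_1..x_n (identified with 1..n), edges {x_i, x_(i+1)}.\<close>
definition path_V :: "nat \<Rightarrow> nat set" where
  "path_V n = {1..n}"

definition path_E :: "nat \<Rightarrow> nat \<Rightarrow> bool" where
  "path_E i j \<longleftrightarrow> j = Suc i \<or> i = Suc j"

end

theory Submission
  imports Defs
begin

(* Distance in P_n is |u - v|, so a labeling of P_n is a set S with injective labels such that
   every vertex u has some v in S labelled |u - v|.  For n = 2, 3 a finite case analysis shows
   that no injective labeling covers all vertices, even without the vertex labelled 0.
   Labelings exist for n = 1, 4, 5, 6, and from n >= 5 on, a labeling that avoids x_1 and uses
   only labels < n extends to P_(n+2): shift it one step to the right, label x_2 with n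
   (covering x_(n+2)) and x_(n+2) with n + 1 (covering x_1); the new labeling again avoids x_1
   and has labels < n + 2. *)

definition path_dist :: "nat \<Rightarrow> nat \<Rightarrow> nat" where
  "path_dist u v = (u - v) + (v - u)"

lemma walk_path_imp_path_dist_le:
  assumes "walk (path_V n) path_E k u v"
  shows "u \<in> {1..n}" "v \<in> {1..n}" "path_dist u v \<le> k"
proof -
  obtain w where w0: "w 0 = u" and wk: "w k = v" and wV: "\<forall>i\<le>k. w i \<in> path_V n"
    and wE: "\<forall>i<k. path_E (w i) (w (Suc i))"
    using assms unfolding walk_def by blast
  show "u \<in> {1..n}" "v \<in> {1..n}"
    using wV w0 wk by (auto simp: path_V_def)
  have "path_dist u (w i) \<le> i" if "i \<le> k" for i
    using that
  proof (induction i)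
    case 0
    then show ?case using w0 by (simp add: path_dist_def)
  next
    case (Suc i)
    then have "path_dist u (w i) \<le> i" and "path_E (w i) (w (Suc i))"
      using wE by auto
    then show ?case unfolding path_E_def path_dist_def by linarith
  qed
  then show "path_dist u v \<le> k" using wk by blast
qed

lemma walk_path_dist:
  assumes "u \<in> {1..n}" "v \<in> {1..n}"
  shows "walk (path_V n) path_E (path_dist u v) u v"
proof (cases "u \<le> v")
  case True
  show ?thesis unfolding walk_def
    by (rule exI[where x="\<lambda>i. u + i"])
      (use True assms in \<open>auto simp: path_dist_def path_V_def path_E_def\<close>)
next
  case False
  show ?thesis unfolding walk_def
    by (rule exI[where x="\<lambda>i. u - i"])
      (use False assms in \<open>auto simp: path_dist_def path_V_def path_E_def\<close>)
qed

lemma graph_dist_is_path_iff: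
  "graph_dist_is (path_V n) path_E u v l \<longleftrightarrow> u \<in> {1..n} \<and> v \<in> {1..n} \<and> l = path_dist u v"
proof
  assume "graph_dist_is (path_V n) path_E u v l"
  then have walk: "walk (path_V n) path_E l u v"
    and shortest: "\<forall>k<l. \<not> walk (path_V n) path_E k u v"
    unfolding graph_dist_is_def by auto
  note bounds = walk_path_imp_path_dist_le[OF walk]
  moreover have "\<not> path_dist u v < l"
    using shortest walk_path_dist[OF bounds(1,2)] by blast
  ultimately show "u \<in> {1..n} \<and> v \<in> {1..n} \<and> l = path_dist u v" by simp
next
  assume "u \<in> {1..n} \<and> v \<in> {1..n} \<and> l = path_dist u v"
  then show "graph_dist_is (path_V n) path_E u v l"
    unfolding graph_dist_is_def
    using walk_path_dist walk_path_imp_path_dist_le(3) not_le by blast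
qed

definition path_labeling :: "nat \<Rightarrow> nat set \<Rightarrow> (nat \<Rightarrow> nat) \<Rightarrow> bool" where
  "path_labeling n S lam \<longleftrightarrow> S \<subseteq> {1..n} \<and> inj_on lam S
     \<and> (\<forall>u\<in>{1..n}. \<exists>v\<in>S. lam v = path_dist u v) \<and> (\<exists>v\<in>S. lam v = 0)"

lemma ext_irr_dom_labeling_path_iff:
  "ext_irr_dom_labeling (path_V n) path_E S lam \<longleftrightarrow> path_labeling n S lam"
  unfolding ext_irr_dom_labeling_def path_labeling_def dominates_def graph_dist_is_path_iff
  by (auto simp: path_V_def; fastforce)

lemma admits_ext_irr_dom_labeling_path_iff:
  "admits_ext_irr_dom_labeling (path_V n) path_E \<longleftrightarrow> (\<exists>S lam. path_labeling n S lam)"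
  unfolding admits_ext_irr_dom_labeling_def ext_irr_dom_labeling_path_iff ..

definition extendable_path_labeling :: "nat \<Rightarrow> nat set \<Rightarrow> (nat \<Rightarrow> nat) \<Rightarrow> bool" where
  "extendable_path_labeling n S lam \<longleftrightarrow> path_labeling n S lam \<and> 1 \<notin> S \<and> (\<forall>v\<in>S. lam v < n)"

lemma extendable_path_labeling_add_two:
  assumes "extendable_path_labeling n S lam"
  shows "extendable_path_labeling (n + 2) (Suc ` S \<union> {2, n + 2})
           (\<lambda>v. if v = 2 then n else if v = n + 2 then n + 1 else lam (v - 1))"
    (is "extendable_path_labeling _ ?S ?lam")
proof -
  have S: "S \<subseteq> {1..n}" and inj: "inj_on lam S" and "1 \<notin> S"
    and cover: "\<forall>u\<in>{1..n}. \<exists>v\<in>S. lam v = path_dist u v"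
    and zero: "\<exists>v\<in>S. lam v = 0" and small: "\<forall>v\<in>S. lam v < n"
    using assms unfolding extendable_path_labeling_def path_labeling_def by auto
  have inner: "2 \<le> v \<and> v \<le> n" if "v \<in> S" for v
  proof -
    have "v \<in> {1..n}" "v \<noteq> 1" using that S \<open>1 \<notin> S\<close> by auto
    then show ?thesis by simp
  qed
  have "n \<ge> 2" using zero inner by fastforce
  have shifted: "?lam (Suc v) = lam v" if "v \<in> S" for v
  proof -
    have "Suc v \<noteq> 2" "Suc v \<noteq> n + 2" using inner[OF that] by auto
    then show ?thesis by simp
  qed
  have "inj_on ?lam (Suc ` S)"
    by (rule inj_on_imageI) (use inj shifted in \<open>auto simp: inj_on_def\<close>)
  moreover have "?lam ` Suc ` S \<inter> ?lam ` {2, n + 2} = {}"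
    using small shifted by fastforce
  moreover have "inj_on ?lam {2, n + 2}"
    by (simp add: inj_on_def)
  ultimately have "inj_on ?lam ?S"
    unfolding inj_on_Un by blast
  moreover have "\<exists>v\<in>?S. ?lam v = path_dist u v" if u: "u \<in> {1..n + 2}" for u
  proof -
    consider "u = 1" | "u = n + 2" | "u - 1 \<in> {1..n}"
      using u by fastforce
    then show ?thesis
    proof cases
      case 1
      then show ?thesis using \<open>n \<ge> 2\<close> by (intro bexI[of _ "n + 2"]) (auto simp: path_dist_def)
    next
      case 2
      then show ?thesis by (intro bexI[of _ 2]) (auto simp: path_dist_def)
    next
      case 3
      then obtain v where "v \<in> S" "lam v = path_dist (u - 1) v"
        using cover by blast
      then show ?thesis using shifted[of v] inner[of v] u
        by (intro bexI[of _ "Suc v"]) (auto simp: path_dist_def)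
    qed
  qed
  moreover have "?S \<subseteq> {1..n + 2}" "1 \<notin> ?S" "\<exists>v\<in>?S. ?lam v = 0" "\<forall>v\<in>?S. ?lam v < n + 2"
    using inner zero small shifted by force+
  ultimately show ?thesis
    unfolding extendable_path_labeling_def path_labeling_def by blast
qed

lemma path_labeling_1: "path_labeling 1 {1} (\<lambda>v. 0)"
  unfolding path_labeling_def by (simp add: path_dist_def)

lemma path_labeling_4:
  "path_labeling 4 {1, 2, 3, 4} (\<lambda>v. if v = 1 then 3 else if v = 2 then 0 else if v = 3 then 2 else 1)"
  unfolding path_labeling_def
  by (auto simp: path_dist_def inj_on_def numeral_eq_Suc atLeastAtMostSuc_conv)

lemma extendable_path_labeling_5:
  "extendable_path_labeling 5 {2, 3, 4, 5}
     (\<lambda>v. if v = 2 then 1 else if v = 3 then 2 else if v = 4 then 0 else 3)"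
  unfolding extendable_path_labeling_def path_labeling_def
  by (auto simp: path_dist_def inj_on_def numeral_eq_Suc atLeastAtMostSuc_conv)

lemma extendable_path_labeling_6:
  "extendable_path_labeling 6 {2, 3, 5, 6}
     (\<lambda>v. if v = 2 then 0 else if v = 3 then 2 else if v = 5 then 1 else 3)"
  unfolding extendable_path_labeling_def path_labeling_def
  by (auto simp: path_dist_def inj_on_def numeral_eq_Suc atLeastAtMostSuc_conv)

lemma extendable_path_labeling_exists:
  assumes "n \<ge> 5"
  shows "\<exists>S lam. extendable_path_labeling n S lam"
  using assms
proof (induction n rule: less_induct)
  case (less n)
  consider "n = 5" | "n = 6" | "n - 2 \<ge> 5"
    using less.prems by linarith
  then show ?case
  proof cases
    case 1
    then show ?thesis using extendable_path_labeling_5 by blast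
  next
    case 2
    then show ?thesis using extendable_path_labeling_6 by blast
  next
    case 3
    then obtain S lam where "extendable_path_labeling (n - 2 + 2) S lam"
      using less.IH[of "n - 2"] extendable_path_labeling_add_two by fastforce
    moreover have "n - 2 + 2 = n" using 3 by simp
    ultimately show ?thesis by auto
  qed
qed

lemma path_2_no_injective_cover:
  assumes "S \<subseteq> {1..2}" "inj_on lam S" "\<forall>u\<in>{1..2}. \<exists>v\<in>S. lam v = path_dist u v"
  shows False
proof -
  have "{1..2::nat} = {1, 2}" by auto
  then obtain a b where in_S: "a \<in> S" "b \<in> S" and "S \<subseteq> {1, 2}"
    and labels: "lam a = path_dist 1 a" "lam b = path_dist 2 b"
    using assms(1,3) by auto
  then have "a = 1 \<or> a = 2" "b = 1 \<or> b = 2"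
    by auto
  moreover have "lam a = lam b \<longrightarrow> a = b"
    using assms(2) in_S by (simp add: inj_on_eq_iff)
  ultimately show False
    using labels by (elim disjE) (simp_all add: path_dist_def)
qed

lemma path_3_no_injective_cover:
  assumes "S \<subseteq> {1..3}" "inj_on lam S" "\<forall>u\<in>{1..3}. \<exists>v\<in>S. lam v = path_dist u v"
  shows False
proof -
  have "{1..3::nat} = {1, 2, 3}" by auto
  then obtain a b c where in_S: "a \<in> S" "b \<in> S" "c \<in> S" and "S \<subseteq> {1, 2, 3}"
    and labels: "lam a = path_dist 1 a" "lam b = path_dist 2 b" "lam c = path_dist 3 c"
    using assms(1,3) by auto
  then have "a = 1 \<or> a = 2 \<or> a = 3" "b = 1 \<or> b = 2 \<or> b = 3" "c = 1 \<or> c = 2 \<or> c = 3"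
    by auto
  moreover have "lam a = lam b \<longrightarrow> a = b" "lam a = lam c \<longrightarrow> a = c" "lam b = lam c \<longrightarrow> b = c"
    using assms(2) in_S by (simp_all add: inj_on_eq_iff)
  ultimately show False
    using labels by (elim disjE) (simp_all add: path_dist_def)
qed

theorem proposition5p5:
  fixes n :: nat
  assumes "n \<ge> 1"
  shows "admits_ext_irr_dom_labeling (path_V n) path_E \<longleftrightarrow> n \<noteq> 2 \<and> n \<noteq> 3"
  unfolding admits_ext_irr_dom_labeling_path_iff
proof
  assume "\<exists>S lam. path_labeling n S lam"
  then show "n \<noteq> 2 \<and> n \<noteq> 3"
    using path_2_no_injective_cover path_3_no_injective_cover
    unfolding path_labeling_def by blast
next
  assume "n \<noteq> 2 \<and> n \<noteq> 3"
  with assms consider "n = 1" | "n = 4" | "n \<ge> 5"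
    by linarith
  then show "\<exists>S lam. path_labeling n S lam"
  proof cases
    case 3
    then show ?thesis
      using extendable_path_labeling_exists unfolding extendable_path_labeling_def by blast
  qed (use path_labeling_1 path_labeling_4 in blast)+
qed

end
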